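(* Under the setup described in the context (a connected graph $G$ with $\mathrm{col}(G)=d\geq 3$, $M=K_1\vee G$ with apex $w$, and an $m$-fold cover $\mathcal{H}=(L,H)$ of $M$ with $m\geq d+3$ in which $E_H(L(u),L(v))$ is a perfect matching for every $uv\in E(M)$): if $L(w)$ contains at least $m-1$ level vertices, then there is a natural bijection between the $\mathcal{H}$-colorings of $M$ and the proper $m$-colorings of $M$; consequently $P_{DP}(M,\mathcal{H})=P(M,m)$.
   Context: All graphs are finite and simple. $\mathrm{col}(G)$ is the smallest $d$ such that some ordering of $V(G)$ has each vertex with at most $d-1$ earlier neighbors. $M=K_1\vee G$ is the join of $G$ with a single new vertex $w$. $P(M,m)$ is the chromatic polynomial. A cover of a graph $G$ is a pair $\mathcal{H}=(L,H)$ where $H$ is a graph and $L:V(G)\to\mathcal{P}(V(H))$ satisfies: (1) the sets $L(u)$ partition $V(H)$; (2) each $H[L(u)]$ is complete; (3) if $E_H(L(u),L(v))\neq\emptyset$ then $u=v$ or $uv\in E(G)$; (4) if $uv\in E(G)$ then $E_H(L(u),L(v))$ is a matching. $E_H(S,U)$ is the set of edges of $H$ between $S$ and $U$; the cover is $m$-fold if all $|L(u)|=m$; an $\mathcal{H}$-coloring is an independent set of $H$ of size $|V(G)|$, and $P_{DP}(G,\mathcal{H})$ counts them. Natural bijection: for an $m$-fold cover $\mathcal{H}$ of a graph $G$, the elements of each $L(v)$ can be labeled $\{(v,j):j\in[m]\}$ so that $(u,j)(v,j)\in E(H)$ for all $uv\in E(G)$ and $j\in[m]$. Setup: write $L(w)=\{(w,j):j\in[m]\}$;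 for $j\in[m]$ and $v\in V(G)$ let $H^{(j)}=H-N_H[(w,j)]$ and $L^{(j)}(v)=L(v)\setminus N_H((w,j))$, so $\mathcal{H}^{(j)}=(L^{(j)},H^{(j)})$ is an $(m-1)$-fold cover of $G$. Cross-edges of $H^{(j)}$ are its edges joining $L^{(j)}(x)$ and $L^{(j)}(y)$ for distinct $x,y\in V(G)$. The vertex $(w,t)$ is a level vertex if $H^{(t)}$ has exactly $|E(G)|(m-1)$ cross-edges. *)

theory Defs
  imports Main "HOL-Library.FuncSet"
begin

definition simple_graph :: "'a set \<Rightarrow> 'a set set \<Rightarrow> bool" where
  "simple_graph V E \<longleftrightarrow> finite V \<and>
     (\<forall>e\<in>E. \<exists>u v. e = {u, v} \<and> u \<noteq> v \<and> u \<in> V \<and> v \<in> V)"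

definition connected_graph :: "'a set \<Rightarrow> 'a set set \<Rightarrow> bool" where
  "connected_graph V E \<longleftrightarrow> V \<noteq> {} \<and>
     (\<forall>u\<in>V. \<forall>v\<in>V. (u, v) \<in> {(x, y). {x, y} \<in> E}\<^sup>*)"

definition col_ordering :: "'a set \<Rightarrow> 'a set set \<Rightarrow> nat \<Rightarrow> bool" where
  "col_ordering V E d \<longleftrightarrow> (\<exists>xs. distinct xs \<and> set xs = V \<and>
     (\<forall>i<length xs. card {j. j < i \<and> {xs ! i, xs ! j} \<in> E} + 1 \<le> d))"

definition col :: "'a set \<Rightarrow> 'a set set \<Rightarrow> nat" where
  "col V E = (LEAST d. col_ordering V E d)"

definition join_vertices :: "'a \<Rightarrow> 'a set \<Rightarrow> 'a set" where
  "join_vertices w V = insert w V"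

definition join_edges :: "'a \<Rightarrow> 'a set \<Rightarrow> 'a set set \<Rightarrow> 'a set set" where
  "join_edges w V E = E \<union> {{w, v} | v. v \<in> V}"

definition is_cover ::
  "'a set \<Rightarrow> 'a set set \<Rightarrow> ('a \<Rightarrow> 'b set) \<Rightarrow> 'b set \<Rightarrow> 'b set set \<Rightarrow> bool" where
  "is_cover V E L VH EH \<longleftrightarrow>
     simple_graph VH EH \<and>
     \<comment> \<open>(1) the sets L(u) partition V(H)\<close>
     (\<forall>u\<in>V. L u \<noteq> {}) \<and>
     (\<Union>u\<in>V. L u) = VH \<and>
     (\<forall>u\<in>V. \<forall>v\<in>V. u \<noteq> v \<longrightarrow> L u \<inter> L v = {}) \<and>
     \<comment> \<open>(2) each H[L(u)] is complete\<close>
     (\<forall>u\<in>V. \<forall>a\<in>L u. \<forall>b\<in>L u. a \<noteq> b \<longrightarrow> {a, b} \<in> EH) \<and>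
     \<comment> \<open>(3) edges between L(u), L(v) only if u = v or uv is an edge\<close>
     (\<forall>u\<in>V. \<forall>v\<in>V. (\<exists>a\<in>L u. \<exists>b\<in>L v. {a, b} \<in> EH) \<longrightarrow> u = v \<or> {u, v} \<in> E) \<and>
     \<comment> \<open>(4) for uv in E, E_H(L(u),L(v)) is a matching\<close>
     (\<forall>u\<in>V. \<forall>v\<in>V. {u, v} \<in> E \<longrightarrow>
        (\<forall>a\<in>L u. \<forall>b\<in>L v. \<forall>b'\<in>L v. {a, b} \<in> EH \<and> {a, b'} \<in> EH \<longrightarrow> b = b'))"

definition m_fold :: "'a set \<Rightarrow> ('a \<Rightarrow> 'b set) \<Rightarrow> nat \<Rightarrow> bool" where
  "m_fold V L m \<longleftrightarrow> (\<forall>u\<in>V. finite (L u) \<and> card (L u) = m)"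

text \<open>E_H(L(u),L(v)) is a perfect matching for every edge uv.\<close>

definition full_cover :: "'a set \<Rightarrow> 'a set set \<Rightarrow> ('a \<Rightarrow> 'b set) \<Rightarrow> 'b set set \<Rightarrow> bool" where
  "full_cover V E L EH \<longleftrightarrow>
     (\<forall>u\<in>V. \<forall>v\<in>V. {u, v} \<in> E \<longrightarrow> (\<forall>a\<in>L u. \<exists>!b. b \<in> L v \<and> {a, b} \<in> EH))"

definition independent :: "'b set set \<Rightarrow> 'b set \<Rightarrow> bool" where
  "independent EH I \<longleftrightarrow> (\<forall>a\<in>I. \<forall>b\<in>I. {a, b} \<notin> EH)"

definition DP_colorings :: "'a set \<Rightarrow> 'b set \<Rightarrow> 'b set set \<Rightarrow> 'b set set" where
  "DP_colorings V VH EH = {I. I \<subseteq> VH \<and> independent EH I \<and> card I = card V}"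

definition P_DP :: "'a set \<Rightarrow> 'b set \<Rightarrow> 'b set set \<Rightarrow> nat" where
  "P_DP V VH EH = card (DP_colorings V VH EH)"

definition proper_colorings :: "'a set \<Rightarrow> 'a set set \<Rightarrow> nat \<Rightarrow> ('a \<Rightarrow> nat) set" where
  "proper_colorings V E m =
     {f. f \<in> V \<rightarrow>\<^sub>E {..<m} \<and> (\<forall>u\<in>V. \<forall>v\<in>V. {u, v} \<in> E \<longrightarrow> f u \<noteq> f v)}"

definition chrom_poly :: "'a set \<Rightarrow> 'a set set \<Rightarrow> nat \<Rightarrow> nat" where
  "chrom_poly V E m = card (proper_colorings V E m)"

definition closed_nbhd :: "'b set set \<Rightarrow> 'b \<Rightarrow> 'b set" where
  "closed_nbhd EH x = insert x {y. {x, y} \<in> EH}"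

text \<open>Cross-edges of H^(x) = H - N_H[x]: edges joining L^(x)(a) and L^(x)(b) for
  distinct vertices a, b of G.\<close>

definition cross_edges ::
  "'a set \<Rightarrow> ('a \<Rightarrow> 'b set) \<Rightarrow> 'b set set \<Rightarrow> 'b \<Rightarrow> 'b set set" where
  "cross_edges V L EH x =
     {e \<in> EH. \<exists>u v a b. u \<in> V \<and> v \<in> V \<and> u \<noteq> v \<and>
        a \<in> L u - closed_nbhd EH x \<and> b \<in> L v - closed_nbhd EH x \<and> e = {a, b}}"

definition level_vertex ::
  "'a set \<Rightarrow> 'a set set \<Rightarrow> ('a \<Rightarrow> 'b set) \<Rightarrow> 'b set set \<Rightarrow> nat \<Rightarrow> 'b \<Rightarrow> bool" where
  "level_vertex V E L EH m x \<longleftrightarrow> card (cross_edges V L EH x) = card E * (m - 1)"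

definition natural_labeling ::
  "'a set \<Rightarrow> 'a set set \<Rightarrow> ('a \<Rightarrow> 'b set) \<Rightarrow> 'b set set \<Rightarrow> nat \<Rightarrow> ('a \<Rightarrow> nat \<Rightarrow> 'b) \<Rightarrow> bool" where
  "natural_labeling V E L EH m \<phi> \<longleftrightarrow>
     (\<forall>v\<in>V. bij_betw (\<phi> v) {..<m} (L v)) \<and>
     (\<forall>u\<in>V. \<forall>v\<in>V. {u, v} \<in> E \<longrightarrow> (\<forall>j<m. {\<phi> u j, \<phi> v j} \<in> EH))"

end

theory Submission
  imports Defs
begin

text \<open>Every vertex x of L(w) is matched to exactly one vertex of each L(v); call x coherent when
  these partners span a copy of G in H. Counting the cross-edges of H - N_H[x] edge by edge shows
  that a level vertex is coherent: every edge of G contributes at most m - 1 of them, and an edge on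
  which x is incoherent at most m - 2. Since the matchings are bijections, once all but one vertex of
  L(w) are coherent so is the last. Labelling L(w) by [m] and transporting the labels along the
  matchings from w then yields a natural labelling, and any natural labelling identifies proper
  m-colourings f with H-colourings via f \<mapsto> {(v, f v)}.\<close>

lemma simple_graph_edge_vertices:
  assumes "simple_graph V E" "{u, v} \<in> E"
  shows "u \<in> V" "v \<in> V"
  using assms unfolding simple_graph_def by (metis doubleton_eq_iff)+

lemma simple_graph_edgeE:
  assumes "simple_graph V E" "e \<in> E"
  obtains u v where "e = {u, v}" "u \<in> V" "v \<in> V"
  using assms unfolding simple_graph_def by blast

lemma simple_graph_no_loop:
  assumes "simple_graph V E"
  shows "{a, a} \<notin> E"
  using assms unfolding simple_graph_def by (metis doubleton_eq_iff)

lemma finite_simple_graph_edges: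
  assumes "simple_graph V E"
  shows "finite E"
proof -
  have "E \<subseteq> Pow V"
    using assms by (auto elim: simple_graph_edgeE)
  moreover have "finite V"
    using assms unfolding simple_graph_def by blast
  ultimately show ?thesis
    by (meson finite_Pow_iff finite_subset)
qed

lemma is_coverD:
  assumes "is_cover V E L VH EH"
  shows "simple_graph VH EH" and "(\<Union>u\<in>V. L u) = VH"
    and "u \<in> V \<Longrightarrow> v \<in> V \<Longrightarrow> u \<noteq> v \<Longrightarrow> L u \<inter> L v = {}"
    and "u \<in> V \<Longrightarrow> a \<in> L u \<Longrightarrow> b \<in> L u \<Longrightarrow> a \<noteq> b \<Longrightarrow> {a, b} \<in> EH"
    and "{u, v} \<in> E \<Longrightarrow> u \<in> V \<Longrightarrow> v \<in> V \<Longrightarrow> a \<in> L u \<Longrightarrow> b \<in> L v \<Longrightarrow> b' \<in> L v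
      \<Longrightarrow> {a, b} \<in> EH \<Longrightarrow> {a, b'} \<in> EH \<Longrightarrow> b = b'"
  using assms unfolding is_cover_def by simp_all

lemma is_cover_adjacent:
  assumes "is_cover V E L VH EH" "u \<in> V" "v \<in> V" "a \<in> L u" "b \<in> L v" "{a, b} \<in> EH"
  shows "u = v \<or> {u, v} \<in> E"
proof -
  have "\<forall>u\<in>V. \<forall>v\<in>V. (\<exists>a\<in>L u. \<exists>b\<in>L v. {a, b} \<in> EH) \<longrightarrow> u = v \<or> {u, v} \<in> E"
    using assms(1) unfolding is_cover_def by simp
  then show ?thesis
    using assms(2-) by blast
qed

definition cover_partner :: "('a \<Rightarrow> 'b set) \<Rightarrow> 'b set set \<Rightarrow> 'a \<Rightarrow> 'b \<Rightarrow> 'b" where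
  "cover_partner L EH v a = (THE b. b \<in> L v \<and> {a, b} \<in> EH)"

context
  fixes V :: "'a set" and E :: "'a set set" and L :: "'a \<Rightarrow> 'b set" and EH :: "'b set set"
    and u v :: 'a
  assumes full: "full_cover V E L EH" and uv: "u \<in> V" "v \<in> V" "{u, v} \<in> E"
begin

lemma full_cover_ex1_partner:
  "a \<in> L u \<Longrightarrow> \<exists>!b. b \<in> L v \<and> {a, b} \<in> EH"
  using full uv unfolding full_cover_def by blast

lemma full_cover_partner:
  assumes "a \<in> L u"
  shows "cover_partner L EH v a \<in> L v" "{a, cover_partner L EH v a} \<in> EH"
  using theI'[OF full_cover_ex1_partner[OF assms]] unfolding cover_partner_def by blast+

lemma full_cover_partner_unique:
  assumes "a \<in> L u" "b \<in> L v" "{a, b} \<in> EH"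
  shows "b = cover_partner L EH v a"
  using the1_equality[OF full_cover_ex1_partner] assms unfolding cover_partner_def by blast

end

lemma full_cover_partner_partner:
  assumes full: "full_cover V E L EH" and uv: "u \<in> V" "v \<in> V" "{u, v} \<in> E" and a: "a \<in> L u"
  shows "cover_partner L EH u (cover_partner L EH v a) = a"
proof -
  have vu: "{v, u} \<in> E"
    using uv by (simp add: insert_commute)
  have "cover_partner L EH v a \<in> L v" "{cover_partner L EH v a, a} \<in> EH"
    using full_cover_partner[OF full uv a] by (simp_all add: insert_commute)
  then show ?thesis
    using full_cover_partner_unique[OF full uv(2,1) vu _ a] by simp
qed

lemma bij_betw_full_cover_partner:
  assumes full: "full_cover V E L EH" and uv: "u \<in> V" "v \<in> V" "{u, v} \<in> E"
  shows "bij_betw (cover_partner L EH v) (L u) (L v)"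
proof (rule bij_betw_byWitness[where f' = "cover_partner L EH u"])
  have vu: "{v, u} \<in> E"
    using uv by (simp add: insert_commute)
  show "\<forall>a\<in>L u. cover_partner L EH u (cover_partner L EH v a) = a"
    using full_cover_partner_partner[OF full uv] by blast
  show "\<forall>b\<in>L v. cover_partner L EH v (cover_partner L EH u b) = b"
    using full_cover_partner_partner[OF full uv(2,1) vu] by blast
  show "cover_partner L EH v ` L u \<subseteq> L v" "cover_partner L EH u ` L v \<subseteq> L u"
    using full_cover_partner(1)[OF full uv] full_cover_partner(1)[OF full uv(2,1) vu] by blast+
qed

lemma proper_coloring_range: "f \<in> proper_colorings V E m \<Longrightarrow> v \<in> V \<Longrightarrow> f v < m"
  unfolding proper_colorings_def by auto

lemma proper_coloring_adjacent:
  "f \<in> proper_colorings V E m \<Longrightarrow> u \<in> V \<Longrightarrow> v \<in> V \<Longrightarrow> {u, v} \<in> E \<Longrightarrow> f u \<noteq> f v"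
  unfolding proper_colorings_def by auto

lemma proper_coloring_extensional:
  assumes "f \<in> proper_colorings V E m" "v \<notin> V"
  shows "f v = undefined"
proof -
  have "f \<in> V \<rightarrow>\<^sub>E {..<m}"
    using assms(1) unfolding proper_colorings_def by blast
  then show ?thesis
    using assms(2) by (rule PiE_arb)
qed

locale labeled_cover =
  fixes V :: "'a set" and E :: "'a set set" and L :: "'a \<Rightarrow> 'b set"
    and VH :: "'b set" and EH :: "'b set set" and m :: nat and \<phi> :: "'a \<Rightarrow> nat \<Rightarrow> 'b"
  assumes cover: "is_cover V E L VH EH"
    and finite_vertices: "finite V"
    and labeling: "natural_labeling V E L EH m \<phi>"
begin

lemma list_owner_unique: "u \<in> V \<Longrightarrow> v \<in> V \<Longrightarrow> a \<in> L u \<Longrightarrow> a \<in> L v \<Longrightarrow> u = v"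
  using is_coverD(3)[OF cover] by blast

lemma label_mem: "v \<in> V \<Longrightarrow> j < m \<Longrightarrow> \<phi> v j \<in> L v"
  using labeling unfolding natural_labeling_def by (meson bij_betwE lessThan_iff)

lemma label_inj: "v \<in> V \<Longrightarrow> i < m \<Longrightarrow> j < m \<Longrightarrow> \<phi> v i = \<phi> v j \<Longrightarrow> i = j"
  using labeling unfolding natural_labeling_def bij_betw_def inj_on_def by blast

lemma label_surj: "v \<in> V \<Longrightarrow> a \<in> L v \<Longrightarrow> \<exists>j<m. \<phi> v j = a"
  using labeling unfolding natural_labeling_def bij_betw_def by (metis imageE lessThan_iff)

lemma label_edge: "u \<in> V \<Longrightarrow> v \<in> V \<Longrightarrow> {u, v} \<in> E \<Longrightarrow> j < m \<Longrightarrow> {\<phi> u j, \<phi> v j} \<in> EH"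
  using labeling unfolding natural_labeling_def by blast

lemma label_image_DP_coloring:
  assumes f: "f \<in> proper_colorings V E m"
  shows "(\<lambda>v. \<phi> v (f v)) ` V \<in> DP_colorings V VH EH"
proof -
  let ?I = "(\<lambda>v. \<phi> v (f v)) ` V"
  have mem: "\<phi> v (f v) \<in> L v" if "v \<in> V" for v
    using label_mem proper_coloring_range[OF f] that by blast
  have "?I \<subseteq> VH"
    using mem is_coverD(2)[OF cover] by blast
  moreover have "independent EH ?I"
    unfolding independent_def
  proof (intro ballI notI)
    fix a b assume "a \<in> ?I" "b \<in> ?I" and ab: "{a, b} \<in> EH"
    then obtain u v where uv: "u \<in> V" "v \<in> V" "a = \<phi> u (f u)" "b = \<phi> v (f v)"
      by blast
    have "u \<noteq> v"
      using ab uv simple_graph_no_loop[OF is_coverD(1)[OF cover]] by blast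
    then have e: "{u, v} \<in> E"
      using is_cover_adjacent[OF cover uv(1,2) mem mem] ab uv by blast
    have "{\<phi> u (f u), \<phi> v (f u)} \<in> EH"
      using label_edge[OF uv(1,2) e proper_coloring_range[OF f uv(1)]] .
    then have "\<phi> v (f v) = \<phi> v (f u)"
      using is_coverD(5)[OF cover e uv(1,2) mem[OF uv(1)] mem[OF uv(2)]] ab uv
        label_mem[OF uv(2) proper_coloring_range[OF f uv(1)]] by blast
    then show False
      using label_inj[OF uv(2)] proper_coloring_range[OF f] proper_coloring_adjacent[OF f uv(1,2) e] uv
      by metis
  qed
  moreover have "inj_on (\<lambda>v. \<phi> v (f v)) V"
  proof (rule inj_onI)
    fix u v assume "u \<in> V" "v \<in> V" "\<phi> u (f u) = \<phi> v (f v)"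
    then show "u = v"
      using list_owner_unique mem by metis
  qed
  then have "card ?I = card V"
    by (rule card_image)
  ultimately show ?thesis
    unfolding DP_colorings_def by blast
qed

lemma inj_on_image_label: "inj_on (\<lambda>f. (\<lambda>v. \<phi> v (f v)) ` V) (proper_colorings V E m)"
proof (rule inj_onI)
  fix f g assume f: "f \<in> proper_colorings V E m" and g: "g \<in> proper_colorings V E m"
    and eq: "(\<lambda>v. \<phi> v (f v)) ` V = (\<lambda>v. \<phi> v (g v)) ` V"
  have "f v = g v" if v: "v \<in> V" for v
  proof -
    have "\<phi> v (f v) \<in> (\<lambda>v. \<phi> v (g v)) ` V"
      using v by (simp flip: eq)
    then obtain u where u: "u \<in> V" "\<phi> v (f v) = \<phi> u (g u)"
      by blast
    have "\<phi> u (g u) \<in> L u" "\<phi> u (g u) \<in> L v"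
      using label_mem[OF u(1) proper_coloring_range[OF g u(1)]]
      label_mem[OF v proper_coloring_range[OF f v]] u(2) by simp_all
    then have "u = v"
      using list_owner_unique[OF u(1) v] by blast
    then show ?thesis
      using label_inj[OF v proper_coloring_range[OF f v] proper_coloring_range[OF g v]] u(2) by simp
  qed
  moreover have "f v = g v" if "v \<notin> V" for v
    using proper_coloring_extensional[OF f that] proper_coloring_extensional[OF g that] by simp
  ultimately show "f = g"
    by (meson ext)
qed

lemma DP_coloring_list_unique:
  "I \<in> DP_colorings V VH EH \<Longrightarrow> v \<in> V \<Longrightarrow> a \<in> I \<Longrightarrow> b \<in> I \<Longrightarrow> a \<in> L v \<Longrightarrow> b \<in> L v \<Longrightarrow> a = b"
  using is_coverD(4)[OF cover] unfolding DP_colorings_def independent_def by blast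

text \<open>An independent set meets every clique L v at most once; having card V elements, it meets each.\<close>

lemma DP_coloring_meets_list:
  assumes I: "I \<in> DP_colorings V VH EH" and v: "v \<in> V"
  shows "\<exists>a\<in>I. a \<in> L v"
proof -
  define owner where "owner a = (SOME u. u \<in> V \<and> a \<in> L u)" for a
  have owner: "owner a \<in> V \<and> a \<in> L (owner a)" if "a \<in> I" for a
    unfolding owner_def
    by (rule someI_ex) (use I that is_coverD(2)[OF cover] in \<open>auto simp: DP_colorings_def\<close>)
  have "inj_on owner I"
    by (rule inj_onI) (use DP_coloring_list_unique[OF I] owner in metis)
  then have "card (owner ` I) = card V"
    using I by (simp add: card_image DP_colorings_def)
  then have "owner ` I = V"
    using owner finite_vertices by (metis card_subset_eq image_subsetI)
  then show ?thesis
    using owner v by force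
qed

lemma DP_coloring_label_image:
  assumes I: "I \<in> DP_colorings V VH EH"
  shows "I \<in> (\<lambda>f. (\<lambda>v. \<phi> v (f v)) ` V) ` proper_colorings V E m"
proof -
  have "\<exists>j<m. \<phi> v j \<in> I" if "v \<in> V" for v
    using DP_coloring_meets_list[OF I that] label_surj[OF that] by blast
  then obtain c where c: "\<And>v. v \<in> V \<Longrightarrow> c v < m \<and> \<phi> v (c v) \<in> I"
    by metis
  define f where "f = restrict c V"
  have "f \<in> proper_colorings V E m"
    unfolding proper_colorings_def
  proof (intro CollectI conjI ballI impI)
    show "f \<in> V \<rightarrow>\<^sub>E {..<m}"
      using c unfolding f_def by auto
    fix u v assume "u \<in> V" "v \<in> V" "{u, v} \<in> E"
    then show "f u \<noteq> f v"
      using c[of u] c[of v] label_edge[of u v "c u"] I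
      unfolding f_def DP_colorings_def independent_def by auto
  qed
  moreover have "I = (\<lambda>v. \<phi> v (f v)) ` V"
  proof
    show "I \<subseteq> (\<lambda>v. \<phi> v (f v)) ` V"
    proof
      fix a assume a: "a \<in> I"
      then obtain v where v: "v \<in> V" "a \<in> L v"
        using I is_coverD(2)[OF cover] unfolding DP_colorings_def by blast
      then have "a = \<phi> v (f v)"
        using DP_coloring_list_unique[OF I v(1) a] c label_mem unfolding f_def by simp
      then show "a \<in> (\<lambda>v. \<phi> v (f v)) ` V"
        using v by blast
    qed
    show "(\<lambda>v. \<phi> v (f v)) ` V \<subseteq> I"
      using c unfolding f_def by auto
  qed
  ultimately show ?thesis
    by blast
qed

theorem bij_betw_proper_colorings_DP_colorings:
  "bij_betw (\<lambda>f. (\<lambda>v. \<phi> v (f v)) ` V) (proper_colorings V E m) (DP_colorings V VH EH)"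
  unfolding bij_betw_def
  using inj_on_image_label label_image_DP_coloring DP_coloring_label_image by blast

end

definition coherent :: "'a set set \<Rightarrow> ('a \<Rightarrow> 'b set) \<Rightarrow> 'b set set \<Rightarrow> 'b \<Rightarrow> bool" where
  "coherent E L EH x \<longleftrightarrow>
     (\<forall>u v. {u, v} \<in> E \<longrightarrow> {cover_partner L EH u x, cover_partner L EH v x} \<in> EH)"

locale apex_cover =
  fixes V :: "'a set" and E :: "'a set set" and w :: 'a
    and L :: "'a \<Rightarrow> 'b set" and VH :: "'b set" and EH :: "'b set set" and m :: nat
  assumes graph: "simple_graph V E"
    and apex_notin: "w \<notin> V"
    and cover: "is_cover (join_vertices w V) (join_edges w V E) L VH EH"
    and mfold: "m_fold (join_vertices w V) L m"
    and full: "full_cover (join_vertices w V) (join_edges w V E) L EH"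
begin

abbreviation partner :: "'a \<Rightarrow> 'b \<Rightarrow> 'b" where
  "partner \<equiv> cover_partner L EH"

lemma apex_mem: "w \<in> join_vertices w V"
  and base_mem: "v \<in> V \<Longrightarrow> v \<in> join_vertices w V"
  unfolding join_vertices_def by simp_all

lemma apex_edge: "v \<in> V \<Longrightarrow> {w, v} \<in> join_edges w V E"
  and base_edge: "{u, v} \<in> E \<Longrightarrow> {u, v} \<in> join_edges w V E"
  unfolding join_edges_def by blast+

lemma join_edge_base: "u \<in> V \<Longrightarrow> v \<in> V \<Longrightarrow> {u, v} \<in> join_edges w V E \<Longrightarrow> {u, v} \<in> E"
  unfolding join_edges_def using apex_notin by (auto simp: doubleton_eq_iff)

lemma edge_vertices: "{u, v} \<in> E \<Longrightarrow> u \<in> V \<and> v \<in> V"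
  using simple_graph_edge_vertices[OF graph] by blast

lemma finite_list: "v \<in> join_vertices w V \<Longrightarrow> finite (L v)"
  and card_list: "v \<in> join_vertices w V \<Longrightarrow> card (L v) = m"
  using mfold unfolding m_fold_def by simp_all

lemma apex_partner:
  assumes "v \<in> V" "x \<in> L w"
  shows "partner v x \<in> L v" "{x, partner v x} \<in> EH"
  using full_cover_partner[OF full apex_mem base_mem apex_edge] assms by simp_all

lemma base_partner:
  assumes "{u, v} \<in> E" "a \<in> L u"
  shows "partner v a \<in> L v" "{a, partner v a} \<in> EH"
  using full_cover_partner[OF full base_mem base_mem base_edge] edge_vertices assms by simp_all

lemma base_partner_unique:
  assumes "{u, v} \<in> E" "a \<in> L u" "b \<in> L v" "{a, b} \<in> EH"
  shows "b = partner v a"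
  using full_cover_partner_unique[OF full base_mem base_mem base_edge] edge_vertices assms by simp

lemma base_partner_partner:
  assumes "{u, v} \<in> E" "a \<in> L u"
  shows "partner u (partner v a) = a"
  using full_cover_partner_partner[OF full base_mem base_mem base_edge] edge_vertices assms by simp

lemma bij_betw_apex_partner: "v \<in> V \<Longrightarrow> bij_betw (partner v) (L w) (L v)"
  using bij_betw_full_cover_partner[OF full apex_mem base_mem apex_edge] by simp

definition edge_cross_edges :: "'b set \<Rightarrow> 'a set \<Rightarrow> 'b set set" where
  "edge_cross_edges N e =
     {{a, b} | a b. \<exists>u v. e = {u, v} \<and> a \<in> L u - N \<and> b \<in> L v - N \<and> {a, b} \<in> EH}"

lemma cross_edges_subset_UN:
  "cross_edges V L EH x \<subseteq> (\<Union>e\<in>E. edge_cross_edges (closed_nbhd EH x) e)"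
proof
  fix c assume "c \<in> cross_edges V L EH x"
  then obtain u v a b where uv: "u \<in> V" "v \<in> V" "u \<noteq> v"
    and ab: "a \<in> L u - closed_nbhd EH x" "b \<in> L v - closed_nbhd EH x" "{a, b} \<in> EH" "c = {a, b}"
    unfolding cross_edges_def by blast
  have "{u, v} \<in> E"
    using is_cover_adjacent[OF cover base_mem base_mem] join_edge_base uv ab by blast
  moreover have "c \<in> edge_cross_edges (closed_nbhd EH x) {u, v}"
    unfolding edge_cross_edges_def using ab by blast
  ultimately show "c \<in> (\<Union>e\<in>E. edge_cross_edges (closed_nbhd EH x) e)"
    by blast
qed

lemma edge_cross_edges_subset:
  assumes e: "{u, v} \<in> E"
  shows "edge_cross_edges N {u, v} \<subseteq> (\<lambda>a. {a, partner v a}) ` {a \<in> L u. a \<notin> N \<and> partner v a \<notin> N}"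
proof
  fix c assume "c \<in> edge_cross_edges N {u, v}"
  then obtain u' v' a b where uv': "{u, v} = {u', v'}"
    and ab: "a \<in> L u' - N" "b \<in> L v' - N" "{a, b} \<in> EH" "c = {a, b}"
    unfolding edge_cross_edges_def by blast
  from uv' consider "u' = u" "v' = v" | "u' = v" "v' = u"
    by (auto simp: doubleton_eq_iff)
  then show "c \<in> (\<lambda>a. {a, partner v a}) ` {a \<in> L u. a \<notin> N \<and> partner v a \<notin> N}"
  proof cases
    case 1
    then have "b = partner v a"
      using base_partner_unique[OF e] ab by simp
    then show ?thesis
      using ab 1 by blast
  next
    case 2
    have "a = partner v b"
      using base_partner_unique[OF e, of b a] ab 2 by (simp add: insert_commute)
    then show ?thesis
      using ab 2 by (auto simp: insert_commute)
  qed
qed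

text \<open>The partner of x in L u is deleted with N_H[x], and the partner of (the partner of x in L v)
  is matched to a deleted vertex; on an incoherent edge these are two distinct vertices.\<close>

lemma card_edge_cross_edges:
  assumes x: "x \<in> L w" and e: "{u, v} \<in> E"
  shows "finite (edge_cross_edges (closed_nbhd EH x) {u, v})"
    and "card (edge_cross_edges (closed_nbhd EH x) {u, v}) + card {partner u x, partner u (partner v x)} \<le> m"
proof -
  define N where "N = closed_nbhd EH x"
  define A where "A = {a \<in> L u. a \<notin> N \<and> partner v a \<notin> N}"
  define P where "P = {partner u x, partner u (partner v x)}"
  have ev: "{v, u} \<in> E"
    using e by (simp add: insert_commute)
  have u: "u \<in> join_vertices w V"
    using edge_vertices[OF e] base_mem by blast
  have vx: "partner v x \<in> L v" "{x, partner v x} \<in> EH"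
    using apex_partner edge_vertices[OF e] x by blast+
  have P_sub: "P \<subseteq> L u"
    unfolding P_def using apex_partner(1) base_partner(1)[OF ev vx(1)] edge_vertices[OF e] x by blast
  have "partner u x \<in> N" "partner v (partner u (partner v x)) \<in> N"
    using apex_partner(2) edge_vertices[OF e] x vx base_partner_partner[OF ev vx(1)]
    unfolding N_def closed_nbhd_def by simp_all
  then have "A \<subseteq> L u - P"
    unfolding A_def P_def by blast
  then have A_le: "card A \<le> m - card P"
    using card_mono[of "L u - P" A] card_Diff_subset[OF finite_subset[OF P_sub] P_sub]
      finite_list[OF u] card_list[OF u] by simp
  have P_le: "card P \<le> m"
    using card_mono[OF finite_list[OF u] P_sub] card_list[OF u] by simp
  have fin_A: "finite A"
    using finite_list[OF u] unfolding A_def by simp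
  have sub: "edge_cross_edges N {u, v} \<subseteq> (\<lambda>a. {a, partner v a}) ` A"
    unfolding A_def by (rule edge_cross_edges_subset[OF e])
  show "finite (edge_cross_edges (closed_nbhd EH x) {u, v})"
    using finite_subset[OF sub] fin_A unfolding N_def by blast
  have "card (edge_cross_edges N {u, v}) \<le> card A"
    using card_mono[OF finite_imageI[OF fin_A] sub] card_image_le[OF fin_A] by (rule le_trans)
  then show "card (edge_cross_edges (closed_nbhd EH x) {u, v}) + card {partner u x, partner u (partner v x)} \<le> m"
    using A_le P_le
    unfolding N_def P_def by linarith
qed

lemma edge_cross_edges_bounds:
  assumes x: "x \<in> L w" and e: "e \<in> E"
  shows "finite (edge_cross_edges (closed_nbhd EH x) e)"
    and "card (edge_cross_edges (closed_nbhd EH x) e) \<le> m - 1"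
proof -
  obtain u v where uv: "e = {u, v}" "{u, v} \<in> E"
    using simple_graph_edgeE[OF graph e] e by metis
  have "card (edge_cross_edges (closed_nbhd EH x) e) + card {partner u x, partner u (partner v x)} \<le> m"
    using card_edge_cross_edges(2)[OF x uv(2)] unfolding uv(1) .
  moreover have "1 \<le> card {partner u x, partner u (partner v x)}"
    by (simp add: card_insert_if)
  ultimately show "card (edge_cross_edges (closed_nbhd EH x) e) \<le> m - 1"
    by linarith
  show "finite (edge_cross_edges (closed_nbhd EH x) e)"
    using card_edge_cross_edges(1)[OF x uv(2)] unfolding uv(1) .
qed

lemma level_vertex_coherent:
  assumes m: "2 \<le> m" and x: "x \<in> L w" and level: "level_vertex V E L EH m x"
  shows "coherent E L EH x"
proof (rule ccontr)
  define D where "D = edge_cross_edges (closed_nbhd EH x)"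
  assume "\<not> coherent E L EH x"
  then obtain u0 v0 where e0: "{u0, v0} \<in> E" and bad: "{partner u0 x, partner v0 x} \<notin> EH"
    unfolding coherent_def by blast
  have D_fin: "finite (D e)" and D_le: "card (D e) \<le> m - 1" if "e \<in> E" for e
    using edge_cross_edges_bounds[OF x that] unfolding D_def by simp_all
  have "partner u0 x \<noteq> partner u0 (partner v0 x)"
  proof
    have ev0: "{v0, u0} \<in> E"
      using e0 by (simp add: insert_commute)
    assume "partner u0 x = partner u0 (partner v0 x)"
    then have "{partner v0 x, partner u0 x} \<in> EH"
      using base_partner(2)[OF ev0] apex_partner(1) edge_vertices[OF e0] x by simp
    then show False
      using bad by (simp add: insert_commute)
  qed
  then have "card (D {u0, v0}) + 2 \<le> m"
    using card_edge_cross_edges(2)[OF x e0] unfolding D_def by simp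
  then have D_lt: "card (D {u0, v0}) < m - 1"
    using m by linarith
  have "card (cross_edges V L EH x) \<le> card (\<Union>e\<in>E. D e)"
    using cross_edges_subset_UN finite_simple_graph_edges[OF graph] D_fin
    unfolding D_def by (intro card_mono) auto
  also have "\<dots> \<le> (\<Sum>e\<in>E. card (D e))"
    by (rule card_UN_le[OF finite_simple_graph_edges[OF graph]])
  also have "\<dots> < (\<Sum>e\<in>E. m - 1)"
    using D_le D_lt e0 by (intro sum_strict_mono_ex1 finite_simple_graph_edges[OF graph]) auto
  also have "\<dots> = card E * (m - 1)"
    by simp
  finally show False
    using level unfolding level_vertex_def by simp
qed

lemma coherent_if_others_coherent:
  assumes x: "x \<in> L w" and others: "\<forall>y\<in>L w - {x}. coherent E L EH y"
  shows "coherent E L EH x"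
  unfolding coherent_def
proof (intro allI impI)
  fix u v assume e: "{u, v} \<in> E"
  have ev: "{v, u} \<in> E"
    using e by (simp add: insert_commute)
  have u: "u \<in> V" and v: "v \<in> V"
    using edge_vertices[OF e] by auto
  define b where "b = partner v (partner u x)"
  have b: "b \<in> L v" "{partner u x, b} \<in> EH"
    unfolding b_def using base_partner[OF e apex_partner(1)[OF u x]] by simp_all
  obtain y where y: "y \<in> L w" "partner v y = b"
    using bij_betw_apex_partner[OF v] b(1) unfolding bij_betw_def by (metis imageE)
  show "{partner u x, partner v x} \<in> EH"
  proof (cases "y = x")
    case True
    then show ?thesis
      using b y by simp
  next
    case False
    then have "{partner u y, b} \<in> EH"
      using others y e unfolding coherent_def by blast
    then have "partner u y = partner u b" "partner u x = partner u b"
      using base_partner_unique[OF ev b(1)] apex_partner(1)[OF u] x y(1) b(2)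
      by (simp_all add: insert_commute)
    then have "y = x"
      using bij_betw_apex_partner[OF u] x y(1) unfolding bij_betw_def inj_on_def by metis
    then show ?thesis
      using False by blast
  qed
qed

lemma coherent_if_enough_level_vertices:
  assumes m: "2 \<le> m" and levels: "m - 1 \<le> card {x \<in> L w. level_vertex V E L EH m x}"
    and x: "x \<in> L w"
  shows "coherent E L EH x"
proof -
  define S where "S = {x \<in> L w. level_vertex V E L EH m x}"
  have S_coherent: "coherent E L EH y" if "y \<in> S" for y
    using level_vertex_coherent[OF m] that unfolding S_def by blast
  have "S \<subseteq> L w"
    unfolding S_def by blast
  then have "card (L w - S) = m - card S"
    using card_Diff_subset[OF finite_subset] finite_list[OF apex_mem] card_list[OF apex_mem] by metis
  then have "card (L w - S) \<le> Suc 0"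
    using levels unfolding S_def by linarith
  then have at_most_one: "\<forall>a\<in>L w - S. \<forall>b\<in>L w - S. a = b"
    using card_le_Suc0_iff_eq finite_list[OF apex_mem] by blast
  show ?thesis
  proof (cases "x \<in> S")
    case True
    then show ?thesis
      by (rule S_coherent)
  next
    case False
    then have "\<forall>y\<in>L w - {x}. coherent E L EH y"
      using at_most_one S_coherent x by blast
    then show ?thesis
      by (rule coherent_if_others_coherent[OF x])
  qed
qed

definition transported_labeling :: "(nat \<Rightarrow> 'b) \<Rightarrow> 'a \<Rightarrow> nat \<Rightarrow> 'b" where
  "transported_labeling \<psi> v j = (if v = w then \<psi> j else partner v (\<psi> j))"

lemma bij_betw_transported_labeling:
  assumes \<psi>: "bij_betw \<psi> {..<m} (L w)" and v: "v \<in> join_vertices w V"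
  shows "bij_betw (transported_labeling \<psi> v) {..<m} (L v)"
proof (cases "v = w")
  case True
  then show ?thesis
    using \<psi> unfolding transported_labeling_def by simp
next
  case False
  then have "v \<in> V"
    using v unfolding join_vertices_def by blast
  then have "bij_betw (partner v \<circ> \<psi>) {..<m} (L v)"
    using bij_betw_trans[OF \<psi> bij_betw_apex_partner] by blast
  then show ?thesis
    using False unfolding transported_labeling_def comp_def by simp
qed

lemma transported_labeling_edge:
  assumes coherent: "\<forall>x\<in>L w. coherent E L EH x" and \<psi>: "bij_betw \<psi> {..<m} (L w)"
    and uv: "{u, v} \<in> join_edges w V E" and j: "j < m"
  shows "{transported_labeling \<psi> u j, transported_labeling \<psi> v j} \<in> EH"
proof -
  have \<psi>j: "\<psi> j \<in> L w"
    using \<psi> j by (meson bij_betwE lessThan_iff)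
  consider "{u, v} \<in> E" | z where "z \<in> V" "{u, v} = {w, z}"
    using uv unfolding join_edges_def by blast
  then show ?thesis
  proof cases
    case 1
    then have "u \<noteq> w" "v \<noteq> w"
      using edge_vertices apex_notin by blast+
    then show ?thesis
      using coherent \<psi>j 1 unfolding coherent_def transported_labeling_def by simp
  next
    case 2
    then have "z \<noteq> w"
      using apex_notin by blast
    then show ?thesis
      using 2 apex_partner(2)[OF 2(1) \<psi>j] unfolding transported_labeling_def
      by (auto simp: doubleton_eq_iff insert_commute)
  qed
qed

lemma natural_labeling_if_coherent:
  assumes coherent: "\<forall>x\<in>L w. coherent E L EH x"
  shows "\<exists>\<phi>. natural_labeling (join_vertices w V) (join_edges w V E) L EH m \<phi>"
proof -
  obtain \<psi> where \<psi>: "bij_betw \<psi> {..<m} (L w)"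
    using ex_bij_betw_nat_finite[OF finite_list[OF apex_mem]] card_list[OF apex_mem]
    by (metis atLeast0LessThan)
  then have "natural_labeling (join_vertices w V) (join_edges w V E) L EH m (transported_labeling \<psi>)"
    unfolding natural_labeling_def
    using bij_betw_transported_labeling transported_labeling_edge[OF coherent] by blast
  then show ?thesis
    by blast
qed

end

theorem mainTheorem16:
  fixes V :: "'a set" and E :: "'a set set" and w :: 'a
    and L :: "'a \<Rightarrow> 'b set" and VH :: "'b set" and EH :: "'b set set"
    and d m :: nat
  assumes G: "simple_graph V E"
    and conn: "connected_graph V E"
    and colG: "col V E = d" and d3: "d \<ge> 3"
    and wnew: "w \<notin> V"
    and cover: "is_cover (join_vertices w V) (join_edges w V E) L VH EH"
    and mfold: "m_fold (join_vertices w V) L m"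
    and md: "m \<ge> d + 3"
    and full: "full_cover (join_vertices w V) (join_edges w V E) L EH"
    and levels: "card {x \<in> L w. level_vertex V E L EH m x} \<ge> m - 1"
  shows "(\<exists>\<phi>. natural_labeling (join_vertices w V) (join_edges w V E) L EH m \<phi> \<and>
           bij_betw (\<lambda>f. (\<lambda>v. \<phi> v (f v)) ` join_vertices w V)
             (proper_colorings (join_vertices w V) (join_edges w V E) m)
             (DP_colorings (join_vertices w V) VH EH)) \<and>
         P_DP (join_vertices w V) VH EH = chrom_poly (join_vertices w V) (join_edges w V E) m"
proof -
  interpret apex_cover V E w L VH EH m
    using G wnew cover mfold full by unfold_locales
  have "2 \<le> m"
    using md d3 by simp
  then obtain \<phi> where \<phi>: "natural_labeling (join_vertices w V) (join_edges w V E) L EH m \<phi>"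
    using natural_labeling_if_coherent coherent_if_enough_level_vertices levels by blast
  have "finite (join_vertices w V)"
    using G unfolding simple_graph_def join_vertices_def by simp
  then interpret labeled_cover "join_vertices w V" "join_edges w V E" L VH EH m \<phi>
    using cover \<phi> by unfold_locales
  have "card (proper_colorings (join_vertices w V) (join_edges w V E) m)
      = card (DP_colorings (join_vertices w V) VH EH)"
    by (rule bij_betw_same_card[OF bij_betw_proper_colorings_DP_colorings])
  then show ?thesis
    using \<phi> bij_betw_proper_colorings_DP_colorings unfolding P_DP_def chrom_poly_def by auto
qed

end
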